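(* Suppose ambiguous communication benefits the sender, i.e. $V_{\mathrm{amb}} > V_{\mathrm{stat}}$. Then there exists a canonical ambiguous experiment $\Sigma$ such that $\tau^{*} \in BR(\Sigma)$ but $\tau^{*} \notin BR(\sigma)$ for every $\sigma \in \Sigma$.
   Context: Setting: $\Omega$ is a finite set of states, $A$ a finite set of receiver actions. Sender and receiver share a set of priors $P \subseteq \Delta(\Omega)$, nonempty, closed and convex; both have maxmin expected utility preferences. Payoffs are $u_s, u_r : A \times \Omega \to \mathbb{R}$. A statistical experiment with finite message set $M$ is a map $\sigma: \Omega \to \Delta(M)$, written $\sigma(m\mid\omega)$. A receiver strategy is $\tau: M \to \Delta(A)$, written $\tau(a\mid m)$. For $p \in P$ and $i \in \{s,r\}$, $u_i(p,\sigma,\tau) = \sum_{\omega,m,a} p(\omega)\sigma(m\mid\omega)\tau(a\mid m)u_i(a,\omega)$ and $u_i(\sigma,\tau) = \min_{p\in P} u_i(p,\sigma,\tau)$. An ambiguous experiment is a nonempty closed convex set $\Sigma$ of statistical experiments with a common finite message set $M$; $U_i(\Sigma,\tau) = \min_{\sigma \in \Sigma} u_i(\sigma,\tau)$. Best responses: $BR(\sigma) = \arg\max_{\tau} u_r(\sigma,\tau)$ and $BR(\Sigma) = \arg\max_{\tau} U_r(\Sigma,\tau)$, maximizing over all strategies $\tau: M \to \Delta(A)$. An experiment is canonical if its message set is $M = A$. The obedient strategy $\tau^{*}: A \to \Delta(A)$ is $\tau^{*}(a\mid a) = 1$ for all $a \in A$. The sender's value with statistical experiments is $V_{\mathrm{stat}}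 = \sup\{u_s(\sigma,\tau) : M \text{ finite}, \sigma:\Omega\to\Delta(M), \tau \in BR(\sigma)\}$, and with ambiguous experiments is $V_{\mathrm{amb}} = \sup\{U_s(\Sigma,\tau) : M \text{ finite}, \Sigma \text{ ambiguous experiment with message set } M, \tau \in BR(\Sigma)\}$ (the sender selects both the experiment and the receiver's best response). Ambiguous communication benefits the sender if $V_{\mathrm{amb}} > V_{\mathrm{stat}}$. *)

theory Defs
  imports "HOL-Analysis.Analysis"
begin

definition dist_on :: "'x set \<Rightarrow> ('x \<Rightarrow> real) \<Rightarrow> bool" where
  "dist_on S f \<longleftrightarrow> (\<forall>x\<in>S. 0 \<le> f x) \<and> (\<forall>x. x \<notin> S \<longrightarrow> f x = 0) \<and> sum f S = 1"

definition convex_set1 :: "('x \<Rightarrow> real) set \<Rightarrow> bool" where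
  "convex_set1 S \<longleftrightarrow> (\<forall>x\<in>S. \<forall>y\<in>S. \<forall>t::real. 0 \<le> t \<and> t \<le> 1 \<longrightarrow>
      (\<lambda>w. t * x w + (1 - t) * y w) \<in> S)"

definition convex_set2 :: "('x \<Rightarrow> 'y \<Rightarrow> real) set \<Rightarrow> bool" where
  "convex_set2 S \<longleftrightarrow> (\<forall>x\<in>S. \<forall>y\<in>S. \<forall>t::real. 0 \<le> t \<and> t \<le> 1 \<longrightarrow>
      (\<lambda>w m. t * x w m + (1 - t) * y w m) \<in> S)"

definition priors_ok :: "('w::finite \<Rightarrow> real) set \<Rightarrow> bool" where
  "priors_ok P \<longleftrightarrow> P \<noteq> {} \<and> closed P \<and> convex_set1 P \<and> (\<forall>p\<in>P. dist_on UNIV p)"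

(* statistical experiment sigma : Omega -> Delta(M), sigma w m = sigma(m|w) *)
definition stat_experiment :: "'m set \<Rightarrow> ('w \<Rightarrow> 'm \<Rightarrow> real) \<Rightarrow> bool" where
  "stat_experiment M \<sigma> \<longleftrightarrow> finite M \<and> (\<forall>w. dist_on M (\<sigma> w))"

(* receiver strategy tau : M -> Delta(A), tau m a = tau(a|m) *)
definition strategy :: "'m set \<Rightarrow> ('m \<Rightarrow> 'a::finite \<Rightarrow> real) \<Rightarrow> bool" where
  "strategy M \<tau> \<longleftrightarrow> (\<forall>m\<in>M. dist_on UNIV (\<tau> m))"

definition eu :: "('a::finite \<Rightarrow> 'w::finite \<Rightarrow> real) \<Rightarrow> 'm set \<Rightarrow> ('w \<Rightarrow> real)
                  \<Rightarrow> ('w \<Rightarrow> 'm \<Rightarrow> real) \<Rightarrow> ('m \<Rightarrow> 'a \<Rightarrow> real) \<Rightarrow> real" where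
  "eu u M p \<sigma> \<tau> = (\<Sum>w\<in>UNIV. \<Sum>m\<in>M. \<Sum>a\<in>UNIV. p w * \<sigma> w m * \<tau> m a * u a w)"

definition uval :: "('w::finite \<Rightarrow> real) set \<Rightarrow> ('a::finite \<Rightarrow> 'w \<Rightarrow> real) \<Rightarrow> 'm set
                    \<Rightarrow> ('w \<Rightarrow> 'm \<Rightarrow> real) \<Rightarrow> ('m \<Rightarrow> 'a \<Rightarrow> real) \<Rightarrow> real" where
  "uval P u M \<sigma> \<tau> = (INF p\<in>P. eu u M p \<sigma> \<tau>)"

definition Uval :: "('w::finite \<Rightarrow> real) set \<Rightarrow> ('a::finite \<Rightarrow> 'w \<Rightarrow> real) \<Rightarrow> 'm set
                    \<Rightarrow> ('w \<Rightarrow> 'm \<Rightarrow> real) set \<Rightarrow> ('m \<Rightarrow> 'a \<Rightarrow> real) \<Rightarrow> real" where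
  "Uval P u M \<Sigma> \<tau> = (INF \<sigma>\<in>\<Sigma>. uval P u M \<sigma> \<tau>)"

definition amb_experiment :: "'m set \<Rightarrow> ('w \<Rightarrow> 'm \<Rightarrow> real) set \<Rightarrow> bool" where
  "amb_experiment M \<Sigma> \<longleftrightarrow> \<Sigma> \<noteq> {} \<and> closed \<Sigma> \<and> convex_set2 \<Sigma> \<and> (\<forall>\<sigma>\<in>\<Sigma>. stat_experiment M \<sigma>)"

definition BR_stat :: "('w::finite \<Rightarrow> real) set \<Rightarrow> ('a::finite \<Rightarrow> 'w \<Rightarrow> real) \<Rightarrow> 'm set
                    \<Rightarrow> ('w \<Rightarrow> 'm \<Rightarrow> real) \<Rightarrow> ('m \<Rightarrow> 'a \<Rightarrow> real) set" where
  "BR_stat P ur M \<sigma> = {\<tau>. strategy M \<tau> \<and>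
      (\<forall>\<tau>'. strategy M \<tau>' \<longrightarrow> uval P ur M \<sigma> \<tau>' \<le> uval P ur M \<sigma> \<tau>)}"

definition BR_amb :: "('w::finite \<Rightarrow> real) set \<Rightarrow> ('a::finite \<Rightarrow> 'w \<Rightarrow> real) \<Rightarrow> 'm set
                    \<Rightarrow> ('w \<Rightarrow> 'm \<Rightarrow> real) set \<Rightarrow> ('m \<Rightarrow> 'a \<Rightarrow> real) set" where
  "BR_amb P ur M \<Sigma> = {\<tau>. strategy M \<tau> \<and>
      (\<forall>\<tau>'. strategy M \<tau>' \<longrightarrow> Uval P ur M \<Sigma> \<tau>' \<le> Uval P ur M \<Sigma> \<tau>)}"

(* Sender values; finite message sets are represented as finite sets of naturals
   (every finite set is in bijection with one). *)
definition V_stat :: "('w::finite \<Rightarrow> real) set \<Rightarrow> ('a::finite \<Rightarrow> 'w \<Rightarrow> real)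
                      \<Rightarrow> ('a \<Rightarrow> 'w \<Rightarrow> real) \<Rightarrow> real" where
  "V_stat P us ur = Sup {uval P us M \<sigma> \<tau> | (M::nat set) \<sigma> \<tau>.
      finite M \<and> stat_experiment M \<sigma> \<and> \<tau> \<in> BR_stat P ur M \<sigma>}"

definition V_amb :: "('w::finite \<Rightarrow> real) set \<Rightarrow> ('a::finite \<Rightarrow> 'w \<Rightarrow> real)
                      \<Rightarrow> ('a \<Rightarrow> 'w \<Rightarrow> real) \<Rightarrow> real" where
  "V_amb P us ur = Sup {Uval P us M \<Sigma> \<tau> | (M::nat set) \<Sigma> \<tau>.
      finite M \<and> amb_experiment M \<Sigma> \<and> \<tau> \<in> BR_amb P ur M \<Sigma>}"

(* obedient strategy for canonical experiments (M = A) *)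
definition obedient :: "'a \<Rightarrow> 'a \<Rightarrow> real" where
  "obedient a b = (if b = a then 1 else 0)"

end

theory Submission
  imports Defs
begin

text \<open>
  A revelation-principle argument. Take an ambiguous experiment \<open>\<Sigma>\<close> with a best response
  \<open>\<tau>\<close> whose sender value exceeds \<open>V_stat\<close>, and replace every \<open>\<sigma> \<in> \<Sigma>\<close> by the canonical
  experiment that recommends the action drawn from \<open>\<tau>\<close>. Obedience against the garbled set
  is worth exactly what \<open>\<tau>\<close> was worth against \<open>\<Sigma>\<close>, so it is a best response. If obedience were
  a best response to a single garbled experiment \<open>\<sigma>'\<close>, the pair would be a statistical
  equilibrium giving the sender at least the ambiguous value, contradicting \<open>V_amb > V_stat\<close>.
\<close>

lemma dist_on_nonneg: "dist_on S f \<Longrightarrow> 0 \<le> f x"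
  by (cases "x \<in> S") (auto simp: dist_on_def)

lemma dist_on_finite: "dist_on S f \<Longrightarrow> finite S"
  by (auto simp: dist_on_def intro: ccontr)

lemma dist_on_le_one:
  assumes "dist_on S f"
  shows "f x \<le> 1"
proof (cases "x \<in> S")
  case True
  with assms dist_on_finite[OF assms] have "f x \<le> sum f S"
    by (intro member_le_sum) (auto simp: dist_on_def)
  with assms show ?thesis by (simp add: dist_on_def)
qed (use assms in \<open>simp add: dist_on_def\<close>)

text \<open>\<open>kcomp M \<sigma> \<tau>\<close> is the experiment \<open>\<sigma>\<close> garbled by the strategy \<open>\<tau>\<close>, which reports the
  recommended action instead of the message; \<open>kcomp UNIV \<tau> \<tau>'\<close> plays \<open>\<tau>'\<close> after \<open>\<tau>\<close>.\<close>

definition kcomp :: "'y set \<Rightarrow> ('x \<Rightarrow> 'y \<Rightarrow> real) \<Rightarrow> ('y \<Rightarrow> 'z \<Rightarrow> real) \<Rightarrow> 'x \<Rightarrow> 'z \<Rightarrow> real" where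
  "kcomp Y \<kappa> \<mu> = (\<lambda>x z. \<Sum>y\<in>Y. \<kappa> x y * \<mu> y z)"

lemma dist_on_kcomp:
  assumes \<kappa>: "dist_on Y (\<kappa> x)" and \<mu>: "\<And>y. y \<in> Y \<Longrightarrow> dist_on Z (\<mu> y)"
  shows "dist_on Z (kcomp Y \<kappa> \<mu> x)"
proof -
  have "(\<Sum>z\<in>Z. kcomp Y \<kappa> \<mu> x z) = (\<Sum>y\<in>Y. \<kappa> x y * (\<Sum>z\<in>Z. \<mu> y z))"
    unfolding kcomp_def by (subst sum.swap) (simp add: sum_distrib_left)
  also have "\<dots> = 1" using \<kappa> \<mu> by (simp add: dist_on_def)
  finally show ?thesis
    using \<kappa> \<mu> unfolding kcomp_def dist_on_def
    by (auto intro!: sum_nonneg mult_nonneg_nonneg)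
qed

lemma kcomp_obedient: "kcomp UNIV \<tau> obedient = (\<tau> :: 'm \<Rightarrow> 'a::finite \<Rightarrow> real)"
  unfolding kcomp_def obedient_def by (auto simp: fun_eq_iff if_distrib cong: if_cong)

lemma strategy_obedient: "strategy UNIV obedient"
  unfolding strategy_def dist_on_def obedient_def by simp

lemma stat_experiment_kcomp:
  "stat_experiment M \<sigma> \<Longrightarrow> strategy M \<tau> \<Longrightarrow> stat_experiment UNIV (kcomp M \<sigma> \<tau>)"
  unfolding stat_experiment_def strategy_def by (simp add: dist_on_kcomp)

lemma strategy_kcomp:
  "strategy M \<tau> \<Longrightarrow> strategy UNIV \<tau>' \<Longrightarrow> strategy M (kcomp UNIV \<tau> \<tau>')"
  unfolding strategy_def by (simp add: dist_on_kcomp)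

lemma eu_kcomp: "eu u UNIV p (kcomp M \<sigma> \<tau>) \<tau>' = eu u M p \<sigma> (kcomp UNIV \<tau> \<tau>')"
proof -
  have swap3: "(\<Sum>a\<in>A. \<Sum>b\<in>B. \<Sum>m\<in>M. f m a b) = (\<Sum>m\<in>M. \<Sum>b\<in>B. \<Sum>a\<in>A. f m a b)"
    for A B and f :: "_ \<Rightarrow> _ \<Rightarrow> _ \<Rightarrow> real"
    by (simp add: sum.swap[of _ B M] sum.swap[of _ A M] sum.swap[of _ A B])
  show ?thesis
    unfolding eu_def kcomp_def
    by (simp add: sum_distrib_left sum_distrib_right mult_ac swap3)
qed

lemma uval_kcomp: "uval P u UNIV (kcomp M \<sigma> \<tau>) \<tau>' = uval P u M \<sigma> (kcomp UNIV \<tau> \<tau>')"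
  unfolding uval_def eu_kcomp ..

lemma Uval_kcomp_image:
  "Uval P u UNIV ((\<lambda>\<sigma>. kcomp M \<sigma> \<tau>) ` \<Sigma>) \<tau>' = Uval P u M \<Sigma> (kcomp UNIV \<tau> \<tau>')"
  unfolding Uval_def image_image uval_kcomp ..

lemma convex_set2_kcomp_image:
  assumes "convex_set2 \<Sigma>"
  shows "convex_set2 ((\<lambda>\<sigma>. kcomp M \<sigma> \<tau>) ` \<Sigma>)"
  unfolding convex_set2_def
proof (intro ballI allI impI)
  fix x y and t :: real
  assume "x \<in> (\<lambda>\<sigma>. kcomp M \<sigma> \<tau>) ` \<Sigma>" "y \<in> (\<lambda>\<sigma>. kcomp M \<sigma> \<tau>) ` \<Sigma>" and t: "0 \<le> t \<and> t \<le> 1"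
  then obtain x0 y0 where "x0 \<in> \<Sigma>" "y0 \<in> \<Sigma>" and xy: "x = kcomp M x0 \<tau>" "y = kcomp M y0 \<tau>"
    by auto
  with assms t have mem: "(\<lambda>w m. t * x0 w m + (1 - t) * y0 w m) \<in> \<Sigma>"
    by (auto simp: convex_set2_def)
  have eq: "kcomp M (\<lambda>w m. t * x0 w m + (1 - t) * y0 w m) \<tau> = (\<lambda>w a. t * x w a + (1 - t) * y w a)"
  proof (intro ext)
    fix w a
    have "(\<Sum>m\<in>M. (t * x0 w m + (1 - t) * y0 w m) * \<tau> m a) =
        (\<Sum>m\<in>M. t * (x0 w m * \<tau> m a) + (1 - t) * (y0 w m * \<tau> m a))"
      by (rule sum.cong[OF refl]) (simp add: algebra_simps)
    also have "\<dots> = t * (\<Sum>m\<in>M. x0 w m * \<tau> m a) + (1 - t) * (\<Sum>m\<in>M. y0 w m * \<tau> m a)"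
      by (simp add: sum.distrib sum_distrib_left)
    finally show "kcomp M (\<lambda>w m. t * x0 w m + (1 - t) * y0 w m) \<tau> w a = t * x w a + (1 - t) * y w a"
      by (simp only: xy kcomp_def)
  qed
  show "(\<lambda>w a. t * x w a + (1 - t) * y w a) \<in> (\<lambda>\<sigma>. kcomp M \<sigma> \<tau>) ` \<Sigma>"
    by (rule image_eqI[where f = "\<lambda>\<sigma>. kcomp M \<sigma> \<tau>", OF eq[symmetric] mem])
qed

lemma compact_unit_box2: "compact {f :: 'x \<Rightarrow> 'y \<Rightarrow> real. \<forall>x y. f x y \<in> {0..1}}"
proof -
  have row: "compact (Pi\<^sub>E (UNIV :: 'y set) (\<lambda>_. {0..1::real}))"
    using compactin_PiE[of "\<lambda>_. euclidean" UNIV "\<lambda>_. {0..1::real}"]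
    by (simp add: euclidean_product_topology)
  have "compact (Pi\<^sub>E (UNIV :: 'x set) (\<lambda>_. Pi\<^sub>E (UNIV :: 'y set) (\<lambda>_. {0..1::real})))"
    using compactin_PiE[of "\<lambda>_. euclidean" UNIV "\<lambda>_. Pi\<^sub>E (UNIV :: 'y set) (\<lambda>_. {0..1::real})"] row
    by (simp add: euclidean_product_topology)
  moreover have "Pi\<^sub>E UNIV (\<lambda>_. Pi\<^sub>E UNIV (\<lambda>_. {0..1})) =
      {f :: 'x \<Rightarrow> 'y \<Rightarrow> real. \<forall>x y. f x y \<in> {0..1}}"
    by (auto simp: PiE_UNIV_domain Pi_iff)
  ultimately show ?thesis by simp
qed

lemma compact_amb_experiment:
  assumes "amb_experiment M \<Sigma>"
  shows "compact \<Sigma>"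
proof -
  have "dist_on M (\<sigma> x)" if "\<sigma> \<in> \<Sigma>" for \<sigma> x
    using assms that by (simp add: amb_experiment_def stat_experiment_def)
  then have "\<Sigma> \<subseteq> {f. \<forall>x y. f x y \<in> {0..1}}"
    by (auto intro: dist_on_nonneg dist_on_le_one)
  then have box: "{f. \<forall>x y. f x y \<in> {0..1}} \<inter> \<Sigma> = \<Sigma>"
    by (rule Int_absorb1)
  have "compact ({f. \<forall>x y. f x y \<in> {0..1}} \<inter> \<Sigma>)"
    using assms by (intro compact_Int_closed compact_unit_box2) (simp add: amb_experiment_def)
  then show ?thesis
    unfolding box .
qed

lemma continuous_on_apply2: "continuous_on S (\<lambda>f :: 'x \<Rightarrow> 'y \<Rightarrow> 'z::topological_space. f x y)"
proof -
  have "continuous_on S (\<lambda>f :: 'x \<Rightarrow> 'y \<Rightarrow> 'z. f x)"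
    by (rule continuous_on_subset[OF continuous_on_product_coordinates]) simp
  then show ?thesis
    by (rule continuous_on_product_then_coordinatewise)
qed

lemma continuous_on_kcomp: "continuous_on S (\<lambda>\<sigma>. kcomp M \<sigma> \<tau>)"
  unfolding kcomp_def
  by (intro continuous_on_coordinatewise_then_product continuous_on_sum continuous_on_mult
      continuous_on_const continuous_on_apply2)

lemma amb_experiment_kcomp_image:
  fixes \<Sigma> :: "('w::countable \<Rightarrow> 'm \<Rightarrow> real) set"
  assumes \<Sigma>: "amb_experiment M \<Sigma>" and \<tau>: "strategy M \<tau>"
  shows "amb_experiment (UNIV :: 'a::finite set) ((\<lambda>\<sigma>. kcomp M \<sigma> (\<tau> :: _ \<Rightarrow> 'a \<Rightarrow> real)) ` \<Sigma>)"
proof -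
  \<comment> \<open>continuous images need not be closed, but \<open>\<Sigma>\<close> is compact since its members are kernels\<close>
  have "compact ((\<lambda>\<sigma>. kcomp M \<sigma> \<tau>) ` \<Sigma>)"
    by (rule compact_continuous_image[OF continuous_on_kcomp compact_amb_experiment[OF \<Sigma>]])
  then have "closed ((\<lambda>\<sigma>. kcomp M \<sigma> \<tau>) ` \<Sigma>)"
    by (rule compact_imp_closed)
  moreover have "convex_set2 ((\<lambda>\<sigma>. kcomp M \<sigma> \<tau>) ` \<Sigma>)"
    using \<Sigma> by (simp add: amb_experiment_def convex_set2_kcomp_image)
  moreover have "\<Sigma> \<noteq> {}"
    using \<Sigma> by (simp add: amb_experiment_def)
  moreover have "\<forall>\<sigma>\<in>\<Sigma>. stat_experiment UNIV (kcomp M \<sigma> \<tau>)"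
    using \<Sigma> \<tau> by (simp add: amb_experiment_def stat_experiment_kcomp)
  ultimately show ?thesis
    unfolding amb_experiment_def by simp
qed

definition abs_payoff_sum :: "('a::finite \<Rightarrow> 'w::finite \<Rightarrow> real) \<Rightarrow> real" where
  "abs_payoff_sum u = (\<Sum>w\<in>UNIV. \<Sum>a\<in>UNIV. \<bar>u a w\<bar>)"

lemma abs_eu_le:
  assumes p: "dist_on UNIV p" and \<sigma>: "stat_experiment M \<sigma>" and \<tau>: "strategy M \<tau>"
  shows "\<bar>eu u M p \<sigma> \<tau>\<bar> \<le> abs_payoff_sum u"
proof -
  have \<sigma>w: "\<And>w. dist_on M (\<sigma> w)" and \<tau>m: "\<And>m. m \<in> M \<Longrightarrow> dist_on UNIV (\<tau> m)"
    using \<sigma> \<tau> by (auto simp: stat_experiment_def strategy_def)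
  have "\<bar>eu u M p \<sigma> \<tau>\<bar> \<le> (\<Sum>w\<in>UNIV. \<Sum>m\<in>M. \<Sum>a\<in>UNIV. \<bar>p w * \<sigma> w m * \<tau> m a * u a w\<bar>)"
    unfolding eu_def
    by (rule order_trans[OF sum_abs], rule sum_mono, rule order_trans[OF sum_abs],
        rule sum_mono, rule sum_abs)
  also have "\<dots> \<le> (\<Sum>w\<in>UNIV. \<Sum>m\<in>M. \<Sum>a\<in>UNIV. p w * \<sigma> w m * \<bar>u a w\<bar>)"
  proof (intro sum_mono)
    fix w m a assume "m \<in> M"
    then have "0 \<le> p w" "0 \<le> \<sigma> w m" "0 \<le> \<tau> m a" "\<tau> m a \<le> 1"
      using p \<sigma>w \<tau>m by (auto intro: dist_on_nonneg dist_on_le_one)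
    then show "\<bar>p w * \<sigma> w m * \<tau> m a * u a w\<bar> \<le> p w * \<sigma> w m * \<bar>u a w\<bar>"
      by (simp add: abs_mult mult.assoc) (intro mult_left_mono mult_left_le_one_le; simp)
  qed
  also have "\<dots> = (\<Sum>w\<in>UNIV. p w * (\<Sum>m\<in>M. \<sigma> w m) * (\<Sum>a\<in>UNIV. \<bar>u a w\<bar>))"
    by (simp add: sum_distrib_left sum_distrib_right mult_ac)
  also have "\<dots> = (\<Sum>w\<in>UNIV. p w * (\<Sum>a\<in>UNIV. \<bar>u a w\<bar>))"
    using \<sigma>w by (simp add: dist_on_def)
  also have "\<dots> \<le> abs_payoff_sum u"
    unfolding abs_payoff_sum_def
    using p by (intro sum_mono mult_left_le_one_le sum_nonneg) (auto intro: dist_on_nonneg dist_on_le_one)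
  finally show ?thesis .
qed

lemma abs_INF_le:
  fixes f :: "'x \<Rightarrow> real"
  assumes "S \<noteq> {}" and bound: "\<And>x. x \<in> S \<Longrightarrow> \<bar>f x\<bar> \<le> B"
  shows "\<bar>INF x\<in>S. f x\<bar> \<le> B"
proof -
  obtain x0 where "x0 \<in> S" using \<open>S \<noteq> {}\<close> by blast
  have "bdd_below (f ` S)"
    by (rule bdd_belowI2[of _ "- B"]) (use bound in force)
  then have "(INF x\<in>S. f x) \<le> f x0"
    using \<open>x0 \<in> S\<close> by (rule cINF_lower)
  moreover have "- B \<le> (INF x\<in>S. f x)"
    using \<open>S \<noteq> {}\<close> by (rule cINF_greatest) (use bound in force)
  ultimately show ?thesis
    using bound[OF \<open>x0 \<in> S\<close>] by linarith
qed

lemma abs_uval_le: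
  "priors_ok P \<Longrightarrow> stat_experiment M \<sigma> \<Longrightarrow> strategy M \<tau> \<Longrightarrow>
    \<bar>uval P u M \<sigma> \<tau>\<bar> \<le> abs_payoff_sum u"
  unfolding uval_def priors_ok_def by (intro abs_INF_le abs_eu_le) auto

lemma abs_Uval_le:
  assumes "priors_ok P" "amb_experiment M \<Sigma>" "strategy M \<tau>"
  shows "\<bar>Uval P u M \<Sigma> \<tau>\<bar> \<le> abs_payoff_sum u"
proof -
  have "\<Sigma> \<noteq> {}" "\<And>\<sigma>. \<sigma> \<in> \<Sigma> \<Longrightarrow> stat_experiment M \<sigma>"
    using assms(2) by (simp_all add: amb_experiment_def)
  then show ?thesis
    unfolding Uval_def using assms(1,3) by (intro abs_INF_le abs_uval_le)
qed

lemma Uval_le_uval: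
  assumes "priors_ok P" "amb_experiment M \<Sigma>" "strategy M \<tau>" "\<sigma> \<in> \<Sigma>"
  shows "Uval P u M \<Sigma> \<tau> \<le> uval P u M \<sigma> \<tau>"
proof -
  have "bdd_below ((\<lambda>\<sigma>. uval P u M \<sigma> \<tau>) ` \<Sigma>)"
    using assms abs_uval_le[of P M _ \<tau> u]
    by (intro bdd_belowI2[of _ "- abs_payoff_sum u"]) (fastforce simp: amb_experiment_def)
  then show ?thesis
    unfolding Uval_def using \<open>\<sigma> \<in> \<Sigma>\<close> by (rule cINF_lower)
qed

definition stat_values :: "('w::finite \<Rightarrow> real) set \<Rightarrow> ('a::finite \<Rightarrow> 'w \<Rightarrow> real) \<Rightarrow> ('a \<Rightarrow> 'w \<Rightarrow> real) \<Rightarrow> real set" where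
  "stat_values P us ur = {uval P us M \<sigma> \<tau> | (M::nat set) \<sigma> \<tau>.
      finite M \<and> stat_experiment M \<sigma> \<and> \<tau> \<in> BR_stat P ur M \<sigma>}"

definition amb_values :: "('w::finite \<Rightarrow> real) set \<Rightarrow> ('a::finite \<Rightarrow> 'w \<Rightarrow> real) \<Rightarrow> ('a \<Rightarrow> 'w \<Rightarrow> real) \<Rightarrow> real set" where
  "amb_values P us ur = {Uval P us M \<Sigma> \<tau> | (M::nat set) \<Sigma> \<tau>.
      finite M \<and> amb_experiment M \<Sigma> \<and> \<tau> \<in> BR_amb P ur M \<Sigma>}"

lemma V_stat_eq_Sup: "V_stat P us ur = Sup (stat_values P us ur)"
  unfolding V_stat_def stat_values_def ..

lemma V_amb_eq_Sup: "V_amb P us ur = Sup (amb_values P us ur)"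
  unfolding V_amb_def amb_values_def ..

lemma bdd_above_stat_values:
  assumes "priors_ok P"
  shows "bdd_above (stat_values P us ur)"
proof (rule bdd_aboveI)
  fix x assume "x \<in> stat_values P us ur"
  then obtain M :: "nat set" and \<sigma> \<tau> where "x = uval P us M \<sigma> \<tau>" "stat_experiment M \<sigma>" "strategy M \<tau>"
    unfolding stat_values_def BR_stat_def by blast
  with abs_uval_le[OF assms, of M \<sigma> \<tau> us] show "x \<le> abs_payoff_sum us"
    by linarith
qed

lemma bdd_above_amb_values:
  assumes "priors_ok P"
  shows "bdd_above (amb_values P us ur)"
proof (rule bdd_aboveI)
  fix x assume "x \<in> amb_values P us ur"
  then obtain M :: "nat set" and \<Sigma> \<tau> where "x = Uval P us M \<Sigma> \<tau>" "amb_experiment M \<Sigma>" "strategy M \<tau>"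
    unfolding amb_values_def BR_amb_def by blast
  with abs_Uval_le[OF assms, of M \<Sigma> \<tau> us] show "x \<le> abs_payoff_sum us"
    by linarith
qed

lemma amb_experiment_singleton:
  fixes \<sigma> :: "'w::countable \<Rightarrow> 'm::countable \<Rightarrow> real"
  shows "stat_experiment M \<sigma> \<Longrightarrow> amb_experiment M {\<sigma>}"
  unfolding amb_experiment_def convex_set2_def by (auto simp: algebra_simps)

lemma BR_amb_singleton: "BR_amb P ur M {\<sigma>} = BR_stat P ur M \<sigma>"
  unfolding BR_amb_def BR_stat_def Uval_def by simp

lemma stat_values_subset_amb_values: "stat_values P us ur \<subseteq> amb_values P us ur"
proof
  fix x assume "x \<in> stat_values P us ur"
  then obtain M :: "nat set" and \<sigma> \<tau> where
    "x = uval P us M \<sigma> \<tau>" "finite M" "stat_experiment M \<sigma>" "\<tau> \<in> BR_stat P ur M \<sigma>"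
    unfolding stat_values_def by blast
  then have "x = Uval P us M {\<sigma>} \<tau>" "finite M" "amb_experiment M {\<sigma>}" "\<tau> \<in> BR_amb P ur M {\<sigma>}"
    by (simp_all add: Uval_def amb_experiment_singleton BR_amb_singleton)
  then show "x \<in> amb_values P us ur"
    unfolding amb_values_def by blast
qed

lemma uval_mem_stat_values:
  fixes \<sigma> :: "'w::finite \<Rightarrow> 'm::finite \<Rightarrow> real" and us ur :: "'a::finite \<Rightarrow> 'w \<Rightarrow> real"
  assumes \<sigma>: "stat_experiment UNIV \<sigma>" and \<tau>: "\<tau> \<in> BR_stat P ur UNIV \<sigma>"
  shows "uval P us UNIV \<sigma> \<tau> \<in> stat_values P us ur"
proof -
  \<comment> \<open>\<open>V_stat\<close> only ranges over message sets of naturals, so relabel the messages\<close>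
  define N where "N = {0..<CARD('m)}"
  obtain h :: "'m \<Rightarrow> nat" where h: "bij_betw h UNIV N"
    unfolding N_def using ex_bij_betw_finite_nat[of "UNIV :: 'm set"] by auto
  define g where "g = inv_into UNIV h"
  have gh: "g (h m) = m" and hN: "h m \<in> N" for m
    using h by (auto simp: g_def bij_betw_def)
  define \<sigma>N where "\<sigma>N = (\<lambda>w n. if n \<in> N then \<sigma> w (g n) else 0)"
  define \<tau>N where "\<tau>N = (\<lambda>n. \<tau> (g n))"
  have sum_N: "sum F N = (\<Sum>m\<in>UNIV. F (h m))" for F :: "nat \<Rightarrow> real"
    by (rule sum.reindex_bij_betw[OF h, symmetric])
  have relabel: "uval P u N \<sigma>N \<tau>' = uval P u UNIV \<sigma> (\<lambda>m. \<tau>' (h m))"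
    for u :: "'a \<Rightarrow> 'w \<Rightarrow> real" and \<tau>'
    unfolding uval_def eu_def sum_N by (simp add: \<sigma>N_def gh hN)
  have \<tau>N_h: "(\<lambda>m. \<tau>N (h m)) = \<tau>"
    by (simp add: \<tau>N_def gh)
  have "dist_on N (\<sigma>N w)" for w
    using \<sigma> unfolding stat_experiment_def dist_on_def \<sigma>N_def sum_N by (simp add: gh hN)
  then have \<sigma>N: "stat_experiment N \<sigma>N"
    unfolding stat_experiment_def N_def by simp
  have "strategy N \<tau>N"
    using \<tau> by (simp add: BR_stat_def strategy_def \<tau>N_def)
  moreover have "uval P ur N \<sigma>N \<tau>' \<le> uval P ur N \<sigma>N \<tau>N" if "strategy N \<tau>'" for \<tau>'
  proof -
    have "strategy UNIV (\<lambda>m. \<tau>' (h m))"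
      using that hN by (simp add: strategy_def)
    then show ?thesis
      using \<tau> by (simp add: relabel \<tau>N_h BR_stat_def)
  qed
  ultimately have "\<tau>N \<in> BR_stat P ur N \<sigma>N"
    unfolding BR_stat_def by blast
  moreover have "finite N"
    unfolding N_def by simp
  ultimately show ?thesis
    using \<sigma>N relabel[of us \<tau>N] unfolding stat_values_def \<tau>N_h
    by (intro CollectI exI[of _ N] exI[of _ \<sigma>N] exI[of _ \<tau>N]) simp
qed

lemma uval_le_V_stat:
  fixes \<sigma> :: "'w::finite \<Rightarrow> 'm::finite \<Rightarrow> real" and us ur :: "'a::finite \<Rightarrow> 'w \<Rightarrow> real"
  assumes "priors_ok P" "stat_experiment UNIV \<sigma>" "\<tau> \<in> BR_stat P ur UNIV \<sigma>"
  shows "uval P us UNIV \<sigma> \<tau> \<le> V_stat P us ur"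
  unfolding V_stat_eq_Sup
  by (rule cSup_upper[OF uval_mem_stat_values[OF assms(2,3)] bdd_above_stat_values[OF assms(1)]])

lemma ex_amb_value_gt_V_stat:
  assumes "priors_ok P" and gt: "V_stat P us ur < V_amb P us ur"
  shows "\<exists>(M :: nat set) \<Sigma> \<tau>. amb_experiment M \<Sigma> \<and> \<tau> \<in> BR_amb P ur M \<Sigma> \<and>
           V_stat P us ur < Uval P us M \<Sigma> \<tau>"
proof -
  \<comment> \<open>otherwise both values are the junk \<open>Sup {}\<close>, which cannot be strictly ordered\<close>
  have ne: "amb_values P us ur \<noteq> {}"
  proof
    assume none: "amb_values P us ur = {}"
    then have "stat_values P us ur = {}"
      using stat_values_subset_amb_values by blast
    with none gt show False
      by (simp add: V_stat_eq_Sup V_amb_eq_Sup)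
  qed
  then obtain x where x: "x \<in> amb_values P us ur" and "V_stat P us ur < x"
    using less_cSup_iff[OF ne bdd_above_amb_values[OF assms(1)]] gt by (auto simp: V_amb_eq_Sup)
  moreover obtain M :: "nat set" and \<Sigma> \<tau> where
    "x = Uval P us M \<Sigma> \<tau>" "amb_experiment M \<Sigma>" "\<tau> \<in> BR_amb P ur M \<Sigma>"
    using x unfolding amb_values_def by blast
  ultimately show ?thesis
    by blast
qed

lemma obedient_BR_amb_kcomp_image:
  fixes \<tau> :: "'m \<Rightarrow> 'a::finite \<Rightarrow> real"
  assumes "\<tau> \<in> BR_amb P ur M \<Sigma>"
  shows "obedient \<in> BR_amb P ur UNIV ((\<lambda>\<sigma>. kcomp M \<sigma> \<tau>) ` \<Sigma>)"
  unfolding BR_amb_def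
proof (intro CollectI conjI strategy_obedient allI impI)
  fix \<tau>' :: "'a \<Rightarrow> 'a \<Rightarrow> real"
  assume "strategy UNIV \<tau>'"
  with assms have "Uval P ur M \<Sigma> (kcomp UNIV \<tau> \<tau>') \<le> Uval P ur M \<Sigma> \<tau>"
    by (simp add: BR_amb_def strategy_kcomp)
  then show "Uval P ur UNIV ((\<lambda>\<sigma>. kcomp M \<sigma> \<tau>) ` \<Sigma>) \<tau>' \<le>
      Uval P ur UNIV ((\<lambda>\<sigma>. kcomp M \<sigma> \<tau>) ` \<Sigma>) obedient"
    by (simp add: Uval_kcomp_image kcomp_obedient)
qed

theorem lemma2:
  fixes P :: "('w::finite \<Rightarrow> real) set"
    and us ur :: "'a::finite \<Rightarrow> 'w \<Rightarrow> real"
  assumes "priors_ok P"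
    and "V_amb P us ur > V_stat P us ur"
  shows "\<exists>\<Sigma> :: ('w \<Rightarrow> 'a \<Rightarrow> real) set.
           amb_experiment (UNIV :: 'a set) \<Sigma> \<and>
           obedient \<in> BR_amb P ur (UNIV :: 'a set) \<Sigma> \<and>
           (\<forall>\<sigma>\<in>\<Sigma>. obedient \<notin> BR_stat P ur (UNIV :: 'a set) \<sigma>)"
proof -
  obtain M :: "nat set" and \<Sigma> \<tau> where \<Sigma>: "amb_experiment M \<Sigma>" and \<tau>: "\<tau> \<in> BR_amb P ur M \<Sigma>"
    and gt: "V_stat P us ur < Uval P us M \<Sigma> \<tau>"
    using ex_amb_value_gt_V_stat[OF assms] by blast
  define \<Sigma>' where "\<Sigma>' = (\<lambda>\<sigma>. kcomp M \<sigma> \<tau>) ` \<Sigma>"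
  have amb: "amb_experiment (UNIV :: 'a set) \<Sigma>'"
    unfolding \<Sigma>'_def using \<Sigma> \<tau> by (simp add: amb_experiment_kcomp_image BR_amb_def)
  have "obedient \<notin> BR_stat P ur UNIV \<sigma>'" if "\<sigma>' \<in> \<Sigma>'" for \<sigma>'
  proof
    assume "obedient \<in> BR_stat P ur UNIV \<sigma>'"
    with assms(1) amb that have "uval P us UNIV \<sigma>' obedient \<le> V_stat P us ur"
      by (intro uval_le_V_stat) (auto simp: amb_experiment_def)
    moreover have "Uval P us M \<Sigma> \<tau> \<le> uval P us UNIV \<sigma>' obedient"
      using Uval_le_uval[OF assms(1) amb strategy_obedient that]
      by (simp add: \<Sigma>'_def Uval_kcomp_image kcomp_obedient)
    ultimately show False
      using gt by linarith
  qed
  then show ?thesis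
    using amb obedient_BR_amb_kcomp_image[OF \<tau>] unfolding \<Sigma>'_def by blast
qed

end
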